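(* Let $\mathcal{G}_1=\{(Q,\lambda)\in\mathsf{Sp}(n-1,\omega)\times\mathbb{R}_+:\dim\ker(Q-\lambda\,\mathrm{Id})=1\}$ and $\mathcal{G}_0=\{(Q,1)\in\mathcal{G}_1\}$. Then the projection $\pi\colon\mathcal{G}_1\to\mathbb{R}$, $\pi(Q,\lambda)=\lambda$, is a submersion around $\mathcal{G}_0$.
   Context: $\omega$ is the standard symplectic form on $\mathbb{R}^{2(n-1)}$, $\mathsf{Sp}(n-1,\omega)$ the real symplectic group, $\mathbb{R}_+=(0,\infty)$. $\mathcal{G}_1$ is a smooth hypersurface of the open set $\mathcal{G}=\{(Q,\lambda):\dim\ker(Q-\lambda\,\mathrm{Id})\le1\}\subseteq\mathsf{Sp}(n-1,\omega)\times\mathbb{R}_+$, being the zero set of $(Q,\lambda)\mapsto\det(Q-\lambda\,\mathrm{Id})$, which is a submersion near $\mathcal{G}_1$. *)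

theory Defs
  imports "HOL-Analysis.Analysis"
begin

text \<open>Phase space R^(2(n-1)) is modelled as real^('k + 'k), with n - 1 = CARD('k).
  Coordinates Inl i are the q_i, coordinates Inr i are the p_i.\<close>

type_synonym 'k phase = "real ^ ('k + 'k)"
type_synonym 'k pmat = "real ^ ('k + 'k) ^ ('k + 'k)"

definition omega_std :: "'k::finite phase \<Rightarrow> 'k phase \<Rightarrow> real" where
  "omega_std x y = (\<Sum>i\<in>UNIV. x $ Inl i * y $ Inr i - x $ Inr i * y $ Inl i)"

definition symplectic :: "'k::finite pmat \<Rightarrow> bool" where
  "symplectic Q \<longleftrightarrow> (\<forall>x y. omega_std (Q *v x) (Q *v y) = omega_std x y)"

definition G1 :: "('k::finite pmat \<times> real) set" where
  "G1 = {(Q, l). symplectic Q \<and> l > 0 \<and>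
          dim {x. (Q - l *\<^sub>R mat 1) *v x = 0} = 1}"

definition G0 :: "('k::finite pmat \<times> real) set" where
  "G0 = {p \<in> G1. snd p = 1}"

text \<open>Tangent vectors of a subset S of a normed space at p: velocities at 0 of
  curves lying in S near 0 and passing through p (tangent space of an embedded
  submanifold).\<close>
definition tangent_vectors :: "'a::real_normed_vector set \<Rightarrow> 'a \<Rightarrow> 'a set" where
  "tangent_vectors S p = {v. \<exists>\<gamma> e. e > 0 \<and> \<gamma> 0 = p \<and> (\<forall>t\<in>{-e<..<e}. \<gamma> t \<in> S) \<and>
                                  (\<gamma> has_vector_derivative v) (at 0)}"

definition proj_submersion_at :: "('a::real_normed_vector \<times> real) set \<Rightarrow> 'a \<times> real \<Rightarrow> bool" where
  "proj_submersion_at S p \<longleftrightarrow> snd ` tangent_vectors S p = UNIV"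

end

theory Submission
  imports Defs
begin

text \<open>Let \<open>(Q, \<lambda>) \<in> G1\<close>, let \<open>x\<close> span the \<open>\<lambda>\<close>-eigenspace of \<open>Q\<close> and pick \<open>y\<close> with
  \<open>\<omega>(x, y) = 1\<close>. The symplectic map \<open>S\<^sub>a\<close> scaling \<open>x\<close> by \<open>a\<close> and \<open>y\<close> by \<open>1/a\<close> makes \<open>x\<close> an
  eigenvector of \<open>S\<^sub>a Q\<close> for \<open>a\<lambda>\<close>, and by upper semicontinuity of the nullity this eigenspace stays
  one-dimensional for \<open>a\<close> near 1. So \<open>a \<mapsto> (S\<^sub>a Q, a\<lambda>)\<close> is a curve in \<open>G1\<close> whose \<open>\<lambda>\<close>-velocity is
  \<open>\<lambda> \<noteq> 0\<close>: the projection is a submersion at every point of \<open>G1\<close>, and \<open>U\<close> can be the whole space.\<close>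

lemma dim_add_dim_orthogonal_comp:
  fixes U :: "'a::euclidean_space set"
  assumes "subspace U"
  shows "dim U + dim (U\<^sup>\<bottom>) = DIM('a)"
proof -
  have "{u + v |u v. u \<in> U \<and> v \<in> U\<^sup>\<bottom>} = UNIV"
    using subspace_sum_orthogonal_comp[OF assms] by (force simp: set_plus_def set_eq_iff)
  then show ?thesis
    using dim_sums_Int[OF assms subspace_orthogonal_comp[of U]] orthogonal_Int_0[OF assms]
    by simp
qed

lemma dim_le_if_Int_orthogonal_comp_eq_0:
  fixes S U :: "'a::euclidean_space set"
  assumes "subspace S" "subspace U" "S \<inter> U\<^sup>\<bottom> = {0}"
  shows "dim S \<le> dim U"
proof -
  have "dim {s + v |s v. s \<in> S \<and> v \<in> U\<^sup>\<bottom>} \<le> DIM('a)"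
    by (rule dim_subset_UNIV)
  then show ?thesis
    using dim_sums_Int[OF assms(1) subspace_orthogonal_comp[of U]] assms(3)
      dim_add_dim_orthogonal_comp[OF assms(2)] by simp
qed

lemma subspace_kernel_matrix: "subspace {z. (M::real^'n^'m) *v z = 0}"
  by (auto simp: subspace_def matrix_vector_right_distrib matrix_vector_mult_scaleR)

lemma bounded_bilinear_matrix_vector_mult: "bounded_bilinear ((*v) :: real^'n^'m \<Rightarrow> _)"
  by (rule bilinear_conv_bounded_bilinear[THEN iffD1])
    (auto simp: bilinear_def matrix_vector_mult_add_rdistrib matrix_vector_right_distrib
      scaleR_matrix_vector_assoc matrix_vector_mult_scaleR intro!: linearI)

text \<open>\<open>M0\<close> is bounded below on the orthogonal complement of its kernel, so every \<open>M\<close> close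
  to \<open>M0\<close> meets that complement only in 0.\<close>
lemma eventually_dim_kernel_le:
  fixes M :: "'a \<Rightarrow> real^'n^'m"
  assumes "(M \<longlongrightarrow> M0) F"
  shows "eventually (\<lambda>t. dim {z. M t *v z = 0} \<le> dim {z. M0 *v z = 0}) F"
proof -
  define K0 where "K0 = {z. M0 *v z = 0}"
  have K0: "subspace K0" unfolding K0_def by (rule subspace_kernel_matrix)
  have "\<forall>z\<in>K0\<^sup>\<bottom>. M0 *v z = 0 \<longrightarrow> z = 0"
    using orthogonal_Int_0[OF K0] by (auto simp: K0_def)
  then obtain m where m: "m > 0" "\<And>z. z \<in> K0\<^sup>\<bottom> \<Longrightarrow> m * norm z \<le> norm (M0 *v z)"
    using injective_imp_isometric[OF closed_subspace[OF subspace_orthogonal_comp]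
        subspace_orthogonal_comp matrix_vector_mul_bounded_linear] by blast
  obtain C where C: "C > 0" "\<And>(A :: real^'n^'m) z. norm (A *v z) \<le> norm A * norm z * C"
    using bounded_bilinear.pos_bounded[OF bounded_bilinear_matrix_vector_mult] by blast
  have "eventually (\<lambda>t. dist (M t) M0 < m / C) F"
    using assms m C by (auto simp: tendsto_iff)
  then show ?thesis
  proof (rule eventually_mono)
    fix t assume close: "dist (M t) M0 < m / C"
    have "z = 0" if z: "M t *v z = 0" "z \<in> K0\<^sup>\<bottom>" for z
    proof (rule ccontr)
      assume "z \<noteq> 0"
      have "M0 *v z = (M0 - M t) *v z"
        using z by (simp add: matrix_vector_mult_diff_rdistrib)
      then have "m * norm z \<le> norm (M t - M0) * norm z * C"
        using m(2)[OF z(2)] C(2)[of "M0 - M t" z] by (simp add: norm_minus_commute)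
      also have "\<dots> < m * norm z"
        using close \<open>z \<noteq> 0\<close> C by (simp add: dist_norm pos_less_divide_eq mult_ac)
      finally show False by simp
    qed
    then have "{z. M t *v z = 0} \<inter> K0\<^sup>\<bottom> = {0}"
      using subspace_0[OF subspace_orthogonal_comp] by auto
    then show "dim {z. M t *v z = 0} \<le> dim {z. M0 *v z = 0}"
      unfolding K0_def[symmetric] by (rule dim_le_if_Int_orthogonal_comp_eq_0[OF subspace_kernel_matrix K0])
  qed
qed

lemma omega_std_add_left [simp]: "omega_std (x + y) z = omega_std x z + omega_std y z"
  unfolding omega_std_def sum.distrib[symmetric] by (rule sum.cong) (simp_all add: algebra_simps)

lemma omega_std_add_right [simp]: "omega_std x (y + z) = omega_std x y + omega_std x z"
  unfolding omega_std_def sum.distrib[symmetric] by (rule sum.cong) (simp_all add: algebra_simps)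

lemma omega_std_scaleR_left [simp]: "omega_std (c *\<^sub>R x) y = c * omega_std x y"
  unfolding omega_std_def sum_distrib_left by (rule sum.cong) (simp_all add: algebra_simps)

lemma omega_std_scaleR_right [simp]: "omega_std x (c *\<^sub>R y) = c * omega_std x y"
  unfolding omega_std_def sum_distrib_left by (rule sum.cong) (simp_all add: algebra_simps)

lemma omega_std_skew: "omega_std x y = - omega_std y x"
  unfolding omega_std_def sum_negf[symmetric] by (rule sum.cong) (simp_all add: algebra_simps)

lemma omega_std_self [simp]: "omega_std x x = 0"
  using omega_std_skew[of x x] by simp

lemma omega_std_nondegenerate:
  fixes x :: "'k::finite phase"
  assumes "x \<noteq> 0"
  obtains y where "omega_std x y = 1"
proof -
  define Jx :: "'k phase" where "Jx = (\<chi> j. case j of Inl i \<Rightarrow> - x $ Inr i | Inr i \<Rightarrow> x $ Inl i)"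
  have "omega_std x Jx = (\<Sum>j\<in>UNIV <+> UNIV. (x $ j)\<^sup>2)"
    by (simp add: omega_std_def Jx_def power2_eq_square sum.Plus sum.distrib del: UNIV_Plus_UNIV)
  also have "\<dots> = (norm x)\<^sup>2"
    by (simp add: norm_vec_def L2_set_def sum_nonneg)
  finally have "omega_std x Jx > 0"
    using assms by simp
  then show ?thesis
    by (intro that[of "(1 / omega_std x Jx) *\<^sub>R Jx"]) simp
qed

lemma symplectic_mult: "symplectic A \<Longrightarrow> symplectic B \<Longrightarrow> symplectic (A ** B)"
  by (simp add: symplectic_def matrix_vector_mul_assoc[symmetric])

text \<open>If \<open>omega_std x y = 1\<close>, this map scales \<open>x\<close> by \<open>a\<close>, \<open>y\<close> by \<open>1/a\<close>, and fixes the
  symplectic complement of \<open>span {x, y}\<close>.\<close>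
definition symplectic_stretch :: "real \<Rightarrow> 'k::finite phase \<Rightarrow> 'k phase \<Rightarrow> 'k pmat" where
  "symplectic_stretch a x y = mat 1 + (a - 1) *\<^sub>R matrix (\<lambda>z. omega_std z y *\<^sub>R x)
     + (inverse a - 1) *\<^sub>R matrix (\<lambda>z. omega_std x z *\<^sub>R y)"

lemma symplectic_stretch_1 [simp]: "symplectic_stretch 1 x y = mat 1"
  by (simp add: symplectic_stretch_def)

lemma symplectic_stretch_apply:
  "symplectic_stretch a x y *v z = z + ((a - 1) * omega_std z y) *\<^sub>R x
     + ((inverse a - 1) * omega_std x z) *\<^sub>R y"
proof -
  have "linear (\<lambda>z. omega_std z y *\<^sub>R x)" "linear (\<lambda>z. omega_std x z *\<^sub>R y)"
    by (auto intro!: linearI simp: algebra_simps)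
  then show ?thesis
    by (simp add: symplectic_stretch_def matrix_vector_mult_add_rdistrib
        scaleR_matrix_vector_assoc[symmetric])
qed

lemma symplectic_stretch_eigenvector:
  "omega_std x y = 1 \<Longrightarrow> symplectic_stretch a x y *v x = a *\<^sub>R x"
  by (simp add: symplectic_stretch_apply algebra_simps)

lemma symplectic_symplectic_stretch:
  assumes xy: "omega_std x y = 1" and "a \<noteq> 0"
  shows "symplectic (symplectic_stretch a x y)"
  unfolding symplectic_def
proof (intro allI)
  fix z w
  define s q where "s = a - 1" and "q = inverse a - 1"
  have "omega_std y x = -1"
    using omega_std_skew[of y x] xy by simp
  then have "omega_std (symplectic_stretch a x y *v z) (symplectic_stretch a x y *v w)
      = omega_std z w + (s + q + s * q) * (omega_std z y * omega_std x w - omega_std w y * omega_std x z)"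
    unfolding symplectic_stretch_apply s_def[symmetric] q_def[symmetric]
    using omega_std_skew[of z x] omega_std_skew[of w x] omega_std_skew[of y z] omega_std_skew[of y w]
    by (simp add: xy algebra_simps)
  moreover have "s + q + s * q = 0"
    using \<open>a \<noteq> 0\<close> by (simp add: s_def q_def field_simps)
  ultimately show "omega_std (symplectic_stretch a x y *v z) (symplectic_stretch a x y *v w) = omega_std z w"
    by simp
qed

lemma tangent_vectorsI:
  assumes "p \<in> S" "\<gamma> 0 = p" "eventually (\<lambda>t. \<gamma> t \<in> S) (at 0)"
    and "(\<gamma> has_vector_derivative v) (at 0)"
  shows "v \<in> tangent_vectors S p"
proof -
  have "eventually (\<lambda>t. \<gamma> t \<in> S) (nhds 0)"
    using assms(1-3) by (simp add: eventually_nhds_conv_at)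
  then obtain e where "e > 0" "\<And>t. dist t 0 < e \<Longrightarrow> \<gamma> t \<in> S"
    by (auto simp: eventually_nhds_metric)
  then show ?thesis
    unfolding tangent_vectors_def using assms(2,4)
    by (intro CollectI exI[of _ \<gamma>] exI[of _ e]) (auto simp: dist_real_def)
qed

lemma tangent_vectors_scaleR:
  assumes "v \<in> tangent_vectors S p"
  shows "c *\<^sub>R v \<in> tangent_vectors S p"
proof -
  obtain \<gamma> e where e: "e > 0" and "\<gamma> 0 = p" and in_S: "\<forall>t\<in>{-e<..<e}. \<gamma> t \<in> S"
    and \<gamma>': "(\<gamma> has_vector_derivative v) (at 0)"
    using assms by (auto simp: tangent_vectors_def)
  have "p \<in> S"
    using in_S e \<open>\<gamma> 0 = p\<close> by force
  have "((\<lambda>t. c * t) \<longlongrightarrow> 0) (at 0)"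
    by (auto intro!: tendsto_eq_intros)
  then have "eventually (\<lambda>t. c * t \<in> {-e<..<e}) (at 0)"
    using e by (intro topological_tendstoD) auto
  then have "eventually (\<lambda>t. (\<gamma> \<circ> (\<lambda>t. c * t)) t \<in> S) (at 0)"
    by eventually_elim (use in_S in auto)
  moreover have "((\<gamma> \<circ> (\<lambda>t. c * t)) has_vector_derivative c *\<^sub>R v) (at 0)"
    by (rule vector_diff_chain_at) (use \<gamma>' in \<open>auto intro!: derivative_eq_intros
        simp: has_real_derivative_iff_has_vector_derivative[symmetric]\<close>)
  ultimately show ?thesis
    using \<open>p \<in> S\<close> \<open>\<gamma> 0 = p\<close> by (intro tangent_vectorsI) auto
qed

lemma proj_submersion_atI:
  assumes "(v, c) \<in> tangent_vectors S p" "c \<noteq> 0"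
  shows "proj_submersion_at S p"
  unfolding proj_submersion_at_def
proof (intro set_eqI iffI)
  fix w :: real
  have "(w / c) *\<^sub>R (v, c) \<in> tangent_vectors S p"
    by (rule tangent_vectors_scaleR[OF assms(1)])
  then show "w \<in> snd ` tangent_vectors S p"
    using assms(2) by (force simp: image_iff)
qed simp

lemma bounded_linear_matrix_mult_right: "bounded_linear (\<lambda>A :: real^'n^'m. A ** B)"
  by (rule linear_conv_bounded_linear[THEN iffD1])
    (auto intro!: linearI simp: scalar_matrix_assoc[symmetric] matrix_matrix_mult_def vec_eq_iff
      sum.distrib sum_distrib_left algebra_simps)

lemma has_vector_derivative_symplectic_stretch:
  fixes x y :: "'k::finite phase"
  shows "((\<lambda>t. symplectic_stretch (1 + t) x y) has_vector_derivative
      matrix (\<lambda>z. omega_std z y *\<^sub>R x) - matrix (\<lambda>z. omega_std x z *\<^sub>R y)) (at 0)"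
proof -
  define A B :: "'k pmat"
    where "A = matrix (\<lambda>z. omega_std z y *\<^sub>R x)" and "B = matrix (\<lambda>z. omega_std x z *\<^sub>R y)"
  have "((\<lambda>t. (1 + t) - 1) has_real_derivative 1) (at 0)"
    by (auto intro!: derivative_eq_intros)
  moreover have "((\<lambda>t. inverse (1 + t) - 1) has_real_derivative -1) (at 0)"
    by (auto intro!: derivative_eq_intros)
  ultimately have "((\<lambda>t. mat 1 + ((1 + t) - 1) *\<^sub>R A + (inverse (1 + t) - 1) *\<^sub>R B)
      has_vector_derivative 0 + (((1 + 0) - 1) *\<^sub>R 0 + 1 *\<^sub>R A)
        + ((inverse (1 + 0) - 1) *\<^sub>R 0 + (-1) *\<^sub>R B)) (at 0)"
    by (intro has_vector_derivative_add has_vector_derivative_const has_vector_derivative_scaleR)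
  then show ?thesis
    by (simp add: symplectic_stretch_def A_def B_def)
qed

lemma eventually_stretch_curve_in_G1:
  fixes Q :: "'k::finite pmat"
  assumes "(Q, l) \<in> G1" and eigen: "Q *v x = l *\<^sub>R x" "x \<noteq> 0" and xy: "omega_std x y = 1"
  shows "eventually (\<lambda>t. (symplectic_stretch (1 + t) x y ** Q, (1 + t) * l) \<in> G1) (at 0)"
proof -
  have Q: "symplectic Q" "l > 0" "dim {z. (Q - l *\<^sub>R mat 1) *v z = 0} = 1"
    using assms(1) by (simp_all add: G1_def)
  define M where "M t = symplectic_stretch (1 + t) x y ** Q - ((1 + t) * l) *\<^sub>R mat 1" for t
  have "((\<lambda>t. symplectic_stretch (1 + t) x y) \<longlongrightarrow> mat 1) (at 0)"
    using has_vector_derivative_continuous[OF has_vector_derivative_symplectic_stretch]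
    by (simp add: continuous_at)
  then have "(M \<longlongrightarrow> Q - l *\<^sub>R mat 1) (at 0)"
    unfolding M_def
    by (auto intro!: tendsto_eq_intros bounded_linear.tendsto[OF bounded_linear_matrix_mult_right])
  then have "eventually (\<lambda>t. dim {z. M t *v z = 0} \<le> 1) (at 0)"
    using eventually_dim_kernel_le Q(3) by fastforce
  moreover have "eventually (\<lambda>t::real. 1 + t > 0) (at 0)"
    using order_tendstoD(1)[OF tendsto_ident_at[of "0::real" UNIV], of "-1"]
    by (auto elim: eventually_mono)
  ultimately show ?thesis
  proof eventually_elim
    case (elim t)
    have "M t *v x = 0"
      by (simp add: M_def matrix_vector_mult_diff_rdistrib matrix_vector_mul_assoc[symmetric]
          scaleR_matrix_vector_assoc[symmetric] matrix_vector_mult_scaleR eigen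
          symplectic_stretch_eigenvector xy)
    then have "dim {z. M t *v z = 0} \<noteq> 0"
      using eigen(2) by auto
    with elim(1) have "dim {z. M t *v z = 0} = 1"
      by linarith
    moreover have "symplectic (symplectic_stretch (1 + t) x y ** Q)"
      using elim(2) by (intro symplectic_mult symplectic_symplectic_stretch xy Q(1)) simp
    ultimately show ?case
      using elim(2) Q(2) by (simp add: G1_def M_def)
  qed
qed

lemma G1_tangent_vector_rescaling_eigenvalue:
  fixes Q :: "'k::finite pmat"
  assumes "(Q, l) \<in> G1"
  obtains D where "(D, l) \<in> tangent_vectors G1 (Q, l)"
proof -
  have "dim {z. (Q - l *\<^sub>R mat 1) *v z = 0} = 1"
    using assms by (simp add: G1_def)
  then have "\<not> {z. (Q - l *\<^sub>R mat 1) *v z = 0} \<subseteq> {0}"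
    by (simp flip: dim_eq_0)
  then obtain x where "x \<noteq> 0" "(Q - l *\<^sub>R mat 1) *v x = 0"
    by blast
  then have eigen: "Q *v x = l *\<^sub>R x" "x \<noteq> 0"
    by (simp_all add: matrix_vector_mult_diff_rdistrib scaleR_matrix_vector_assoc[symmetric])
  obtain y where xy: "omega_std x y = 1"
    using omega_std_nondegenerate[OF eigen(2)] .
  define D where "D = (matrix (\<lambda>z. omega_std z y *\<^sub>R x) - matrix (\<lambda>z. omega_std x z *\<^sub>R y)) ** Q"
  have "((\<lambda>t. symplectic_stretch (1 + t) x y ** Q) has_vector_derivative D) (at 0)"
    unfolding D_def by (rule bounded_linear.has_vector_derivative[OF bounded_linear_matrix_mult_right
          has_vector_derivative_symplectic_stretch])
  moreover have "((\<lambda>t. (1 + t) * l) has_vector_derivative l) (at 0)"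
    by (auto intro!: derivative_eq_intros simp: has_real_derivative_iff_has_vector_derivative[symmetric])
  ultimately have "((\<lambda>t. (symplectic_stretch (1 + t) x y ** Q, (1 + t) * l)) has_vector_derivative (D, l)) (at 0)"
    by (rule has_vector_derivative_Pair)
  then show ?thesis
    using assms eventually_stretch_curve_in_G1[OF assms eigen xy]
    by (intro that tangent_vectorsI) auto
qed

theorem lemmaA6:
  shows "\<exists>U. open U \<and> (G0 :: ('k::finite pmat \<times> real) set) \<subseteq> U \<and>
             (\<forall>p \<in> (G1 :: ('k pmat \<times> real) set) \<inter> U. proj_submersion_at G1 p)"
proof (intro exI[of _ UNIV] conjI ballI)
  fix p :: "'k pmat \<times> real"
  assume "p \<in> G1 \<inter> UNIV"
  then obtain Q l where "p = (Q, l)" "(Q, l) \<in> G1" and "l > 0"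
    by (cases p) (auto simp: G1_def)
  then obtain D where "(D, l) \<in> tangent_vectors G1 p"
    using G1_tangent_vector_rescaling_eigenvalue by metis
  then show "proj_submersion_at G1 p"
    using \<open>l > 0\<close> by (intro proj_submersion_atI) auto
qed simp_all

end
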